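(* Let $n\ge 1$ and let $\rho$ be a representation of $A_n$ over a set $U$. Then the graph on $U$ whose edges are the pairs $\{x,y\}$ with $(x,y)\in\rho(r)$ contains a clique of size $n^2$.
   Context: For $n\ge 1$, $A_n$ denotes the finite integral symmetric relation algebra with atoms $1'$, $r$, $b_1,\dots,b_n$, all symmetric, in which a diversity cycle $xyz$ is mandatory (i.e. $x;y\ge z$) if and only if it involves $r$, and forbidden (i.e. $x;y\cdot z=0$) otherwise. A representation over a set $U$ is an embedding $\rho$ into the full relation algebra $\langle\mathcal P(U\times U),\cup,{}^c,\circ,{}^{-1},\mathrm{Id}_U\rangle$. *)

theory Defs
  imports Main
begin

datatype atom = One | R | B nat

definition atoms :: "nat \<Rightarrow> atom set" where
  "atoms n = {One, R} \<union> B ` {1..n}"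

definition div_atoms :: "nat \<Rightarrow> atom set" where
  "div_atoms n = atoms n - {One}"

text \<open>Composition of two atoms of A_n (all atoms symmetric, integral):
  1';a = a;1' = a; for diversity atoms x,y: x;y contains 1' iff x = y, and
  contains a diversity atom z iff the cycle xyz involves r.\<close>
definition atom_comp :: "nat \<Rightarrow> atom \<Rightarrow> atom \<Rightarrow> atom set" where
  "atom_comp n a b =
     (if a = One then {b}
      else if b = One then {a}
      else {c \<in> div_atoms n. a = R \<or> b = R \<or> c = R} \<union> (if a = b then {One} else {}))"

text \<open>Elements of A_n are sets of atoms (subsets of atoms n).\<close>
definition An_comp :: "nat \<Rightarrow> atom set \<Rightarrow> atom set \<Rightarrow> atom set" where
  "An_comp n X Y = (\<Union>a\<in>X. \<Union>b\<in>Y. atom_comp n a b)"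

definition An_compl :: "nat \<Rightarrow> atom set \<Rightarrow> atom set" where
  "An_compl n X = atoms n - X"

text \<open>All atoms are symmetric, so converse is the identity map on A_n.\<close>
definition An_conv :: "atom set \<Rightarrow> atom set" where
  "An_conv X = X"

definition is_rep :: "nat \<Rightarrow> 'u set \<Rightarrow> (atom set \<Rightarrow> ('u \<times> 'u) set) \<Rightarrow> bool" where
  "is_rep n U \<rho> \<longleftrightarrow>
     (\<forall>X \<subseteq> atoms n. \<forall>Y \<subseteq> atoms n. \<rho> (X \<union> Y) = \<rho> X \<union> \<rho> Y) \<and>
     (\<forall>X \<subseteq> atoms n. \<rho> (An_compl n X) = (U \<times> U) - \<rho> X) \<and>
     (\<forall>X \<subseteq> atoms n. \<forall>Y \<subseteq> atoms n. \<rho> (An_comp n X Y) = \<rho> X O \<rho> Y) \<and>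
     (\<forall>X \<subseteq> atoms n. \<rho> (An_conv X) = converse (\<rho> X)) \<and>
     \<rho> {One} = Id_on U \<and>
     inj_on \<rho> (Pow (atoms n))"

end

theory Submission
  imports Defs
begin

text \<open>Since \<open>b\<^sub>i ; b\<^sub>j \<ge> r\<close> for all \<open>i, j\<close>, a single \<open>r\<close>-edge \<open>(x, u)\<close> factors as
  \<open>x b\<^sub>i w\<^sub>i\<^sub>j b\<^sub>j u\<close> for each of the \<open>n\<^sup>2\<close> pairs \<open>(i, j)\<close>. The atoms are disjoint, so
  \<open>(i, j)\<close> can be read off \<open>w\<^sub>i\<^sub>j\<close> and the \<open>w\<^sub>i\<^sub>j\<close> are pairwise distinct. Two of them are
  joined by a path \<open>w\<^sub>i\<^sub>j b\<^sub>i x b\<^sub>k w\<^sub>k\<^sub>l\<close>, and \<open>b\<^sub>i ; b\<^sub>k \<le> r + 1'\<close> since every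
  cycle of \<open>b\<close>'s alone is forbidden; so distinct \<open>w\<close>'s are \<open>r\<close>-related.\<close>

lemma B_in_atoms: "i \<in> {1..n} \<Longrightarrow> {B i} \<subseteq> atoms n"
  and R_in_atoms: "{R} \<subseteq> atoms n"
  and One_in_atoms: "{One} \<subseteq> atoms n"
  by (auto simp: atoms_def)

lemma R_in_An_comp_B_B: "i \<in> {1..n} \<Longrightarrow> j \<in> {1..n} \<Longrightarrow> R \<in> An_comp n {B i} {B j}"
  by (auto simp: An_comp_def atom_comp_def div_atoms_def atoms_def)

lemma An_comp_B_B_subset: "An_comp n {B i} {B j} \<subseteq> {R, One}"
  by (auto simp: An_comp_def atom_comp_def div_atoms_def atoms_def)

lemma An_compl_An_compl: "X \<subseteq> atoms n \<Longrightarrow> An_compl n (An_compl n X) = X"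
  and An_compl_subset_atoms: "An_compl n X \<subseteq> atoms n"
  by (auto simp: An_compl_def)

locale An_representation =
  fixes n :: nat and U :: "'u set" and \<rho> :: "atom set \<Rightarrow> ('u \<times> 'u) set"
  assumes is_rep: "is_rep n U \<rho>"
begin

lemma rep_Un: "X \<subseteq> atoms n \<Longrightarrow> Y \<subseteq> atoms n \<Longrightarrow> \<rho> (X \<union> Y) = \<rho> X \<union> \<rho> Y"
  and rep_An_compl: "X \<subseteq> atoms n \<Longrightarrow> \<rho> (An_compl n X) = (U \<times> U) - \<rho> X"
  and rep_An_comp: "X \<subseteq> atoms n \<Longrightarrow> Y \<subseteq> atoms n \<Longrightarrow> \<rho> (An_comp n X Y) = \<rho> X O \<rho> Y"
  and rep_converse: "X \<subseteq> atoms n \<Longrightarrow> converse (\<rho> X) = \<rho> X"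
  and rep_One: "\<rho> {One} = Id_on U"
  and rep_inj: "inj_on \<rho> (Pow (atoms n))"
  using is_rep by (simp_all add: is_rep_def An_conv_def)

lemma rep_subset_Times: "X \<subseteq> atoms n \<Longrightarrow> \<rho> X \<subseteq> U \<times> U"
  using rep_An_compl[of "An_compl n X"] An_compl_An_compl[of X n] An_compl_subset_atoms[of n X]
  by auto

lemma rep_mono: "X \<subseteq> Y \<Longrightarrow> Y \<subseteq> atoms n \<Longrightarrow> \<rho> X \<subseteq> \<rho> Y"
  using rep_Un[of X Y] by (metis Un_absorb1 dual_order.trans sup_ge1)

lemma rep_disjoint:
  assumes "X \<subseteq> atoms n" "Y \<subseteq> atoms n" "X \<inter> Y = {}"
  shows "\<rho> X \<inter> \<rho> Y = {}"
proof -
  have "\<rho> X \<subseteq> \<rho> (An_compl n Y)"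
    using assms An_compl_subset_atoms by (intro rep_mono) (auto simp: An_compl_def)
  then show ?thesis using rep_An_compl[OF assms(2)] by auto
qed

lemma rep_empty: "\<rho> {} = {}"
  using rep_mono[of "{}" "{One}"] rep_disjoint[of "{}" "{One}"] One_in_atoms by auto

lemma rep_R_nonempty: "\<rho> {R} \<noteq> {}"
  using rep_inj rep_empty R_in_atoms[of n] unfolding inj_on_def
  by (metis Pow_iff empty_subsetI insert_not_empty)

lemma rep_B_unique:
  "a \<in> {1..n} \<Longrightarrow> b \<in> {1..n} \<Longrightarrow> p \<in> \<rho> {B a} \<Longrightarrow> p \<in> \<rho> {B b} \<Longrightarrow> a = b"
  using rep_disjoint[OF B_in_atoms B_in_atoms] by blast

lemma R_factors_through_B_B:
  assumes "(x, u) \<in> \<rho> {R}" "i \<in> {1..n}" "j \<in> {1..n}"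
  shows "\<exists>w. (x, w) \<in> \<rho> {B i} \<and> (w, u) \<in> \<rho> {B j}"
proof -
  have "\<rho> {R} \<subseteq> \<rho> (An_comp n {B i} {B j})"
    using R_in_An_comp_B_B[OF assms(2,3)] An_comp_B_B_subset[of n i j] R_in_atoms One_in_atoms
    by (intro rep_mono) auto
  then show ?thesis using assms(1) rep_An_comp[OF B_in_atoms B_in_atoms, OF assms(2,3)] by auto
qed

lemma B_B_path_in_R:
  assumes "(c, x) \<in> \<rho> {B i}" "(x, d) \<in> \<rho> {B j}" "i \<in> {1..n}" "j \<in> {1..n}" "c \<noteq> d"
  shows "(c, d) \<in> \<rho> {R}"
proof -
  have "(c, d) \<in> \<rho> (An_comp n {B i} {B j})"
    using assms rep_An_comp[OF B_in_atoms B_in_atoms, OF assms(3,4)] by auto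
  also have "\<dots> \<subseteq> \<rho> ({R} \<union> {One})"
    using An_comp_B_B_subset[of n i j] R_in_atoms One_in_atoms by (intro rep_mono) auto
  also have "\<dots> = \<rho> {R} \<union> Id_on U"
    using rep_Un[OF R_in_atoms One_in_atoms] rep_One by simp
  finally show ?thesis using \<open>c \<noteq> d\<close> by auto
qed

lemma R_clique_through_R_edge:
  assumes "(x, u) \<in> \<rho> {R}"
  shows "\<exists>C \<subseteq> U. card C = n ^ 2 \<and> (\<forall>c\<in>C. \<forall>d\<in>C. c \<noteq> d \<longrightarrow> (c, d) \<in> \<rho> {R})"
proof -
  let ?I = "{1..n} \<times> {1..n}"
  have "\<forall>p\<in>?I. \<exists>w. (x, w) \<in> \<rho> {B (fst p)} \<and> (w, u) \<in> \<rho> {B (snd p)}"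
    using R_factors_through_B_B[OF assms] by (auto simp: mem_Times_iff)
  then obtain w where w: "\<And>p. p \<in> ?I \<Longrightarrow> (x, w p) \<in> \<rho> {B (fst p)} \<and> (w p, u) \<in> \<rho> {B (snd p)}"
    by (metis (no_types) bchoice)
  have "inj_on w ?I"
  proof (rule inj_onI)
    fix p q assume p: "p \<in> ?I" and q: "q \<in> ?I" and "w p = w q"
    then have "(x, w p) \<in> \<rho> {B (fst q)}" "(w p, u) \<in> \<rho> {B (snd q)}"
      using w[OF q] by simp_all
    then have "fst p = fst q" "snd p = snd q"
      using p q w[OF p] by (auto simp: mem_Times_iff intro: rep_B_unique)
    then show "p = q" by (simp add: prod_eq_iff)
  qed
  then have "card (w ` ?I) = n ^ 2" by (simp add: card_image power2_eq_square)
  moreover have "w ` ?I \<subseteq> U"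
    using w rep_subset_Times[OF B_in_atoms] by (fastforce simp: mem_Times_iff)
  moreover have "(w p, w q) \<in> \<rho> {R}" if "p \<in> ?I" "q \<in> ?I" "w p \<noteq> w q" for p q
    using that w[OF that(1)] w[OF that(2)] rep_converse[OF B_in_atoms, of "fst p"]
    by (intro B_B_path_in_R[where x = x and i = "fst p" and j = "fst q"]) (auto simp: mem_Times_iff)
  ultimately show ?thesis by blast
qed

end

theorem mainTheorem9:
  fixes n :: nat and U :: "'u set" and \<rho> :: "atom set \<Rightarrow> ('u \<times> 'u) set"
  assumes "n \<ge> 1" and "is_rep n U \<rho>"
  shows "\<exists>C \<subseteq> U. card C = n ^ 2 \<and> (\<forall>x\<in>C. \<forall>y\<in>C. x \<noteq> y \<longrightarrow> (x, y) \<in> \<rho> {R})"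
proof -
  interpret An_representation n U \<rho> using assms(2) by unfold_locales
  obtain x u where "(x, u) \<in> \<rho> {R}" using rep_R_nonempty by auto
  then show ?thesis by (rule R_clique_through_R_edge)
qed

end
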